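(* Let $T$ be a fractal CQCA on the spin-$1/2$ chain and let $P=\bigotimes\sigma_i$ be a finite tensor product of Pauli matrices different from the identity. Then for every $k\in\mathbb{N}$ there exists $m\in\mathbb{N}$ such that $T^m(P)$ is (a multiple of) a tensor product containing at least $k$ non-identity Pauli matrices.
   Context: A CQCA is an automorphism $T$ of $\bigotimes_{x\in\mathbb{Z}}M_2$ commuting with translations and mapping Pauli products to multiples of Pauli products; labelling Pauli products by $\xi\in\mathcal{P}^2$ ($\mathcal{P}$ = Laurent polynomials in $u$ over $\mathbb{Z}_2$) one has $T(W(\xi))\propto W(\mathbf{a}\xi)$ for a $2\times 2$ matrix $\mathbf{a}$ over $\mathcal{P}$. $T$ is centered if $\mathbf{a}$ has palindromic entries ($p(u^{-1})=p(u)$) and determinant $1$. A centered CQCA is fractal if $\mathbf{a}$ is neither periodic ($\mathbf{a}^p=\mathbb{1}$ for some $p\ge1$) nor has gliders (non-zero $\xi$ with $\mathbf{a}\xi=u^k\xi$ for some integer $k\neq0$). *)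

theory Defs
  imports Main
begin

text \<open>Laurent polynomials in u over Z_2, represented by their coefficient
  function int => bool (True = coefficient 1); a Laurent polynomial must have
  finite support.\<close>

type_synonym lpoly = "int \<Rightarrow> bool"

definition is_lpoly :: "lpoly \<Rightarrow> bool" where
  "is_lpoly p \<longleftrightarrow> finite {n. p n}"

definition lzero :: lpoly where "lzero = (\<lambda>n. False)"

definition lmon :: "int \<Rightarrow> lpoly" where "lmon k = (\<lambda>n. n = k)"

definition lone :: lpoly where "lone = lmon 0"

definition ladd :: "lpoly \<Rightarrow> lpoly \<Rightarrow> lpoly" where
  "ladd p q = (\<lambda>n. p n \<noteq> q n)"

definition lmul :: "lpoly \<Rightarrow> lpoly \<Rightarrow> lpoly" where
  "lmul p q = (\<lambda>n. odd (card {i. p i \<and> q (n - i)}))"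

definition palindromic :: "lpoly \<Rightarrow> bool" where
  "palindromic p \<longleftrightarrow> (\<forall>n. p (- n) = p n)"

type_synonym mat2 = "lpoly \<times> lpoly \<times> lpoly \<times> lpoly"
type_synonym vec2 = "lpoly \<times> lpoly"

fun mat_vec :: "mat2 \<Rightarrow> vec2 \<Rightarrow> vec2" where
  "mat_vec (a, b, c, d) (x, y) =
     (ladd (lmul a x) (lmul b y), ladd (lmul c x) (lmul d y))"

fun mat_mul :: "mat2 \<Rightarrow> mat2 \<Rightarrow> mat2" where
  "mat_mul (a, b, c, d) (a', b', c', d') =
     (ladd (lmul a a') (lmul b c'), ladd (lmul a b') (lmul b d'),
      ladd (lmul c a') (lmul d c'), ladd (lmul c b') (lmul d d'))"

definition mat_id :: mat2 where "mat_id = (lone, lzero, lzero, lone)"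

primrec mat_pow :: "mat2 \<Rightarrow> nat \<Rightarrow> mat2" where
  "mat_pow A 0 = mat_id"
| "mat_pow A (Suc n) = mat_mul A (mat_pow A n)"

fun mat_det :: "mat2 \<Rightarrow> lpoly" where
  "mat_det (a, b, c, d) = ladd (lmul a d) (lmul b c)"

fun is_lmat :: "mat2 \<Rightarrow> bool" where
  "is_lmat (a, b, c, d) \<longleftrightarrow> is_lpoly a \<and> is_lpoly b \<and> is_lpoly c \<and> is_lpoly d"

definition is_lvec :: "vec2 \<Rightarrow> bool" where
  "is_lvec v \<longleftrightarrow> is_lpoly (fst v) \<and> is_lpoly (snd v)"

definition vzero :: vec2 where "vzero = (lzero, lzero)"

fun centered :: "mat2 \<Rightarrow> bool" where
  "centered (a, b, c, d) \<longleftrightarrow> is_lmat (a, b, c, d) \<and>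
     palindromic a \<and> palindromic b \<and> palindromic c \<and> palindromic d \<and>
     mat_det (a, b, c, d) = lone"

definition periodic :: "mat2 \<Rightarrow> bool" where
  "periodic A \<longleftrightarrow> (\<exists>p::nat. p \<ge> 1 \<and> mat_pow A p = mat_id)"

definition has_glider :: "mat2 \<Rightarrow> bool" where
  "has_glider A \<longleftrightarrow> (\<exists>\<xi> k. is_lvec \<xi> \<and> \<xi> \<noteq> vzero \<and> k \<noteq> (0::int) \<and>
       mat_vec A \<xi> = (lmul (lmon k) (fst \<xi>), lmul (lmon k) (snd \<xi>)))"

definition fractal :: "mat2 \<Rightarrow> bool" where
  "fractal A \<longleftrightarrow> centered A \<and> \<not> periodic A \<and> \<not> has_glider A"

text \<open>Number of non-identity Pauli factors of W(xi): sites x where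
  the factor X^(xi_1 coeff x) Z^(xi_2 coeff x) is not the identity.\<close>
definition pauli_weight :: "vec2 \<Rightarrow> nat" where
  "pauli_weight \<xi> = card {x. fst \<xi> x \<or> snd \<xi> x}"

end

theory Submission
  imports Defs "HOL-Library.Z2" "HOL-Library.Product_Plus"
    "HOL-Computational_Algebra.Formal_Laurent_Series"
begin

text \<open>Over the field \<open>\<int>\<^sub>2((u))\<close> of Laurent series, Pauli vectors become vectors in a plane,
  \<open>A\<close> a determinant-one matrix and translation by \<open>s\<close> multiplication by \<open>u\<^sup>s\<close>. A non-zero orbit
  can then never return to a translate of itself: \<open>A\<^sup>P w = u\<^sup>s w\<close> makes either \<open>A\<^sup>P\<close> scalar (hence the
  identity, so \<open>A\<close> is periodic) or \<open>w\<close> an eigenvector whose eigenvalue, a \<open>P\<close>-th root of \<open>u\<^sup>s\<close>, is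
  itself a power \<open>u\<^sup>k\<close> in characteristic 2 (a glider if \<open>k \<noteq> 0\<close>, and \<open>A\<^sup>2 = 1\<close> if \<open>k = 0\<close>).

  The weight bound is proved by induction on \<open>K\<close>: if every non-zero vector exceeds weight \<open>K\<close> within
  \<open>M\<close> steps but some orbit stays at weight \<open>\<le> K + 1\<close> for long, then its supports have no gaps
  wider than \<open>2MR\<close> (\<open>R\<close> the range of \<open>A\<close>), since the two sides of such a gap would evolve
  independently. So the supports have bounded span, and by pigeonhole the orbit returns to a
  translate of an earlier vector.\<close>

subsection \<open>Two-by-two matrices over a commutative ring\<close>

type_synonym 'a mat22 = "'a \<times> 'a \<times> 'a \<times> 'a"

fun mat22_vec :: "'a::comm_ring_1 mat22 \<Rightarrow> 'a \<times> 'a \<Rightarrow> 'a \<times> 'a" where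
  "mat22_vec (a, b, c, d) (x, y) = (a * x + b * y, c * x + d * y)"

fun mat22_mul :: "'a::comm_ring_1 mat22 \<Rightarrow> 'a mat22 \<Rightarrow> 'a mat22" where
  "mat22_mul (a, b, c, d) (a', b', c', d') =
     (a * a' + b * c', a * b' + b * d', c * a' + d * c', c * b' + d * d')"

fun mat22_det :: "'a::comm_ring_1 mat22 \<Rightarrow> 'a" where
  "mat22_det (a, b, c, d) = a * d - b * c"

fun mat22_trace :: "'a::comm_ring_1 mat22 \<Rightarrow> 'a" where
  "mat22_trace (a, b, c, d) = a + d"

definition scale2 :: "'a::times \<Rightarrow> 'a \<times> 'a \<Rightarrow> 'a \<times> 'a" where
  "scale2 c v = (c * fst v, c * snd v)"

definition wedge :: "'a::comm_ring \<times> 'a \<Rightarrow> 'a \<times> 'a \<Rightarrow> 'a" where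
  "wedge v w = fst v * snd w - snd v * fst w"

lemma scale2_Pair [simp]: "scale2 c (x, y) = (c * x, c * y)"
  by (simp add: scale2_def)

lemma scale2_1 [simp]: "scale2 (1::'a::monoid_mult) v = v"
  by (simp add: scale2_def)

lemma scale2_scale2 [simp]: "scale2 a (scale2 b v) = scale2 (a * b) (v :: 'a::semigroup_mult \<times> 'a)"
  by (simp add: scale2_def mult.assoc)

lemma scale2_cancel:
  fixes w :: "'a::idom \<times> 'a"
  assumes "w \<noteq> 0" "scale2 a w = scale2 b w"
  shows "a = b"
  using assms by (cases w) (auto simp: zero_prod_def)

lemma mat22_vec_mat22_mul: "mat22_vec (mat22_mul A B) v = mat22_vec A (mat22_vec B v)"
  by (cases A; cases B; cases v) (simp add: algebra_simps)

lemma mat22_vec_add: "mat22_vec A (x + y) = mat22_vec A x + mat22_vec A y"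
  by (cases A; cases x; cases y) (simp add: algebra_simps)

lemma mat22_vec_scale2: "mat22_vec A (scale2 c x) = scale2 c (mat22_vec A x)"
  by (cases A; cases x) (simp add: algebra_simps)

lemma funpow_mat22_vec_add: "(mat22_vec A ^^ n) (x + y) = (mat22_vec A ^^ n) x + (mat22_vec A ^^ n) y"
  by (induct n) (simp_all add: mat22_vec_add)

lemma funpow_mat22_vec_scale2: "(mat22_vec A ^^ n) (scale2 c x) = scale2 c ((mat22_vec A ^^ n) x)"
  by (induct n) (simp_all add: mat22_vec_scale2)

lemma mat22_cayley_hamilton:
  "mat22_vec A (mat22_vec A x) = scale2 (mat22_trace A) (mat22_vec A x) - scale2 (mat22_det A) x"
  by (cases A; cases x) (simp add: algebra_simps)

lemma wedge_mat22_vec: "wedge (mat22_vec A x) (mat22_vec A y) = mat22_det A * wedge x y"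
  by (cases A; cases x; cases y) (simp add: wedge_def algebra_simps)

lemma wedge_funpow_mat22_vec:
  assumes "mat22_det A = 1"
  shows "wedge ((mat22_vec A ^^ n) x) ((mat22_vec A ^^ n) y) = wedge x y"
  by (induct n) (simp_all add: wedge_mat22_vec assms)

lemma scale2_wedge_decompose:
  "scale2 (wedge w v) x = scale2 (wedge x v) w + scale2 (wedge w x) v"
  by (cases x; cases v; cases w) (simp add: wedge_def algebra_simps)

lemma mat22_vec_eq_0_imp:
  assumes "mat22_det A = 1" "mat22_vec A x = 0"
  shows "x = 0"
proof -
  obtain a b c d where A: "A = (a, b, c, d)" by (cases A) auto
  obtain x1 x2 where x: "x = (x1, x2)" by (cases x)
  have "a * x1 + b * x2 = 0" "c * x1 + d * x2 = 0"
    using assms(2) by (simp_all add: A x zero_prod_def)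
  moreover have "(a * d - b * c) * x1 = d * (a * x1 + b * x2) - b * (c * x1 + d * x2)"
    and "(a * d - b * c) * x2 = a * (c * x1 + d * x2) - c * (a * x1 + b * x2)"
    by (simp_all add: algebra_simps)
  ultimately show ?thesis using assms(1) by (simp add: A x zero_prod_def)
qed

lemma funpow_mat22_vec_eq_0_imp:
  assumes "mat22_det A = 1" "(mat22_vec A ^^ n) x = 0"
  shows "x = 0"
  using assms(2)
proof (induct n arbitrary: x)
  case (Suc n)
  hence "mat22_vec A ((mat22_vec A ^^ n) x) = 0" by simp
  hence "(mat22_vec A ^^ n) x = 0" by (rule mat22_vec_eq_0_imp[OF assms(1)])
  thus ?case by (rule Suc.hyps)
qed simp

lemma scale2_left_cancel:
  fixes x y :: "'a::idom \<times> 'a"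
  assumes "c \<noteq> 0" "scale2 c x = scale2 c y"
  shows "x = y"
  using assms by (cases x; cases y) simp

lemma wedge_eq_0_imp_parallel:
  fixes w v :: "'a::field \<times> 'a"
  assumes "wedge w v = 0" "w \<noteq> 0"
  obtains c where "v = scale2 c w"
proof -
  obtain w1 w2 where w: "w = (w1, w2)" by (cases w)
  obtain v1 v2 where v: "v = (v1, v2)" by (cases v)
  have cross: "w1 * v2 = w2 * v1" using assms(1) by (simp add: wedge_def w v)
  show ?thesis
  proof (cases "w1 = 0")
    case True
    with assms(2) have "w2 \<noteq> 0" by (simp add: w zero_prod_def)
    with cross True have "v1 = 0" by simp
    with True \<open>w2 \<noteq> 0\<close> show ?thesis by (intro that[of "v2 / w2"]) (simp add: v w)
  next
    case False
    with cross have "v2 = v1 / w1 * w2" by (simp add: field_simps)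
    with False show ?thesis by (intro that[of "v1 / w1"]) (simp add: v w)
  qed
qed

lemma funpow_mat22_vec_eigenvector:
  assumes "mat22_vec A w = scale2 c w"
  shows "(mat22_vec A ^^ n) w = scale2 (c ^ n) w"
  by (induct n) (simp_all add: assms mat22_vec_scale2 mult.commute)

lemma eigenvalue_mat22_char_poly:
  fixes A :: "'a::idom mat22"
  assumes "mat22_vec A w = scale2 c w" "w \<noteq> 0"
  shows "c ^ 2 = mat22_trace A * c - mat22_det A"
proof -
  have "scale2 (c ^ 2) w = mat22_vec A (mat22_vec A w)"
    by (simp add: assms(1) mat22_vec_scale2 power2_eq_square)
  also have "\<dots> = scale2 (mat22_trace A) (scale2 c w) - scale2 (mat22_det A) w"
    using mat22_cayley_hamilton[of A w] assms(1) by simp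
  also have "\<dots> = scale2 (mat22_trace A * c - mat22_det A) w"
    by (cases w) (simp add: algebra_simps)
  finally have "scale2 (c ^ 2) w = scale2 (mat22_trace A * c - mat22_det A) w" .
  thus ?thesis using assms(2) by (rule scale2_cancel[rotated])
qed

text \<open>When \<open>w\<close> and \<open>A w\<close> span the plane, both are eigenvectors of \<open>A\<^sup>P\<close> with the same eigenvalue,
  so \<open>A\<^sup>P\<close> is scalar.\<close>
lemma mat22_power_eigenvector_dichotomy:
  fixes A :: "'a::field mat22"
  assumes w: "w \<noteq> 0" and ret: "(mat22_vec A ^^ P) w = scale2 c w"
  shows "(\<forall>x. (mat22_vec A ^^ P) x = scale2 c x) \<or> (\<exists>\<mu>. mat22_vec A w = scale2 \<mu> w)"
proof (cases "wedge w (mat22_vec A w) = 0")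
  case True
  then obtain \<mu> where "mat22_vec A w = scale2 \<mu> w" using w by (rule wedge_eq_0_imp_parallel)
  thus ?thesis by blast
next
  case False
  define v where "v = mat22_vec A w"
  define \<Delta> where "\<Delta> = wedge w v"
  have ret_v: "(mat22_vec A ^^ P) v = scale2 c v"
    by (simp add: v_def flip: funpow_swap1) (simp add: ret mat22_vec_scale2)
  have "(mat22_vec A ^^ P) x = scale2 c x" for x
  proof (rule scale2_left_cancel)
    show "\<Delta> \<noteq> 0" using False by (simp add: \<Delta>_def v_def)
    have "scale2 \<Delta> ((mat22_vec A ^^ P) x) =
        (mat22_vec A ^^ P) (scale2 (wedge x v) w + scale2 (wedge w x) v)"
      by (simp add: \<Delta>_def funpow_mat22_vec_scale2 flip: scale2_wedge_decompose)
    also have "\<dots> = scale2 c (scale2 (wedge x v) w + scale2 (wedge w x) v)"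
      by (simp add: funpow_mat22_vec_add funpow_mat22_vec_scale2 ret ret_v)
        (simp add: scale2_def algebra_simps)
    also have "\<dots> = scale2 \<Delta> (scale2 c x)"
      by (simp add: \<Delta>_def mult.commute flip: scale2_wedge_decompose)
    finally show "scale2 \<Delta> ((mat22_vec A ^^ P) x) = scale2 \<Delta> (scale2 c x)" .
  qed
  thus ?thesis by blast
qed

subsection \<open>Laurent series over \<open>\<int>\<^sub>2\<close>\<close>

lemma bit_fls_add_self [simp]: "(x :: bit fls) + x = 0"
  by (rule fls_eqI) (cases "fls_nth x n"; simp)

lemma bit_fls_two [simp]: "(2 :: bit fls) = 0"
  by (metis bit_fls_add_self one_add_one)

lemma bit_fls_uminus [simp]: "- (x :: bit fls) = x"
  using bit_fls_add_self[of x] by (metis add_right_imp_eq neg_eq_iff_add_eq_0)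

lemma bit_fls_add_eq_0_iff: "(x :: bit fls) + y = 0 \<longleftrightarrow> x = y"
  by (metis bit_fls_add_self add_right_cancel)

lemma of_nat_bit: "(of_nat m :: bit) = of_bool (odd m)"
  by (induct m) (auto simp: of_bool_def)

lemma bit_fls_square_add: "((x :: bit fls) + y) ^ 2 = x ^ 2 + y ^ 2"
proof -
  have "(x + y) ^ 2 = x ^ 2 + y ^ 2 + (x * y + x * y)" by algebra
  thus ?thesis by simp
qed

text \<open>Even orders reduce to smaller ones via the Frobenius map; for odd \<open>P\<close> the factor
  \<open>1 + \<mu> + \<dots> + \<mu>\<^bsup>P-1\<^esup>\<close> of \<open>\<mu>\<^sup>P - 1\<close> has constant term \<open>P = 1\<close>.\<close>
lemma bit_fls_root_of_unity:
  fixes \<mu> :: "bit fls"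
  assumes sd: "fls_subdegree \<mu> = 0"
  shows "0 < P \<Longrightarrow> \<mu> ^ P = 1 \<Longrightarrow> \<mu> = 1"
proof (induct P rule: less_induct)
  case (less P)
  show ?case
  proof (cases "even P")
    case True
    then obtain Q where Q: "P = 2 * Q" by blast
    with less.prems have "0 < Q" "Q < P" by auto
    have "(\<mu> ^ Q + 1) ^ 2 = \<mu> ^ P + 1"
      by (simp add: bit_fls_square_add Q power_mult[symmetric] mult.commute)
    hence "\<mu> ^ Q = 1" using less.prems by (simp add: bit_fls_add_eq_0_iff)
    thus ?thesis using less.hyps \<open>0 < Q\<close> \<open>Q < P\<close> by blast
  next
    case False
    define S where "S = (\<Sum>i<P. \<mu> ^ i)"
    have "\<mu> \<noteq> 0" using less.prems by (auto simp: zero_power)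
    hence "fls_nth \<mu> 0 = 1" using nth_fls_subdegree_nonzero[of \<mu>] sd by simp
    hence "fls_nth S 0 = of_nat P" using fls_pow_base[of \<mu>] sd by (simp add: S_def fls_nth_sum)
    hence "S \<noteq> 0" using False by (auto simp: of_nat_bit)
    moreover have "(\<mu> - 1) * S = 0"
      using power_diff_1_eq[of \<mu> P] less.prems by (simp add: S_def)
    ultimately show ?thesis by simp
  qed
qed

lemma fls_X_intpow_eq_1_iff: "(fls_X_intpow s :: 'a::zero_neq_one fls) = 1 \<longleftrightarrow> s = 0"
proof
  assume "fls_X_intpow s = (1 :: 'a fls)"
  hence "fls_subdegree (fls_X_intpow s :: 'a fls) = fls_subdegree (1 :: 'a fls)" by simp
  thus "s = 0" by simp
qed simp

lemma bit_fls_power_eq_X_intpow: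
  fixes c :: "bit fls"
  assumes P: "0 < P" and c: "c ^ P = fls_X_intpow s"
  obtains k where "c = fls_X_intpow k"
proof -
  define \<mu> where "\<mu> = fls_base_factor c"
  define k where "k = fls_subdegree c"
  have c_dec: "c = \<mu> * fls_X_intpow k"
    unfolding \<mu>_def k_def by (rule fls_base_factor_X_power_decompose(1))
  have "c \<noteq> 0" using P c by (auto simp: zero_power)
  have "s = int P * k"
    using arg_cong[OF c, of fls_subdegree] \<open>c \<noteq> 0\<close> by (simp add: fls_subdegree_pow k_def)
  hence "\<mu> ^ P * fls_X_intpow (int P * k) = 1 * fls_X_intpow (int P * k)"
    using c c_dec by (simp add: power_mult_distrib fls_X_intpow_power)
  hence "\<mu> ^ P = 1" by (rule mult_right_cancel[THEN iffD1, rotated]) simp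
  moreover have "fls_subdegree \<mu> = 0" by (simp only: \<mu>_def fls_base_factor_subdegree)
  ultimately have "\<mu> = 1" using bit_fls_root_of_unity P by blast
  thus ?thesis using c_dec that by simp
qed

text \<open>A scalar power \<open>u\<^sup>s\<close> has determinant \<open>u\<^bsup>2s\<^esup>\<close>, so \<open>s = 0\<close>; an eigenvalue \<open>1\<close> forces trace \<open>0\<close>,
  hence \<open>A\<^sup>2 = 1\<close> by Cayley-Hamilton.\<close>
lemma bit_fls_mat22_shifted_return:
  fixes A :: "bit fls mat22"
  assumes det: "mat22_det A = 1" and w: "w \<noteq> 0" and P: "0 < P"
    and ret: "(mat22_vec A ^^ P) w = scale2 (fls_X_intpow s) w"
  shows "(\<forall>x. (mat22_vec A ^^ P) x = x) \<or> (\<forall>x. mat22_vec A (mat22_vec A x) = x)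
    \<or> (\<exists>k. k \<noteq> 0 \<and> mat22_vec A w = scale2 (fls_X_intpow k) w)"
  using mat22_power_eigenvector_dichotomy[OF w ret]
proof (elim disjE exE)
  assume scalar: "\<forall>x. (mat22_vec A ^^ P) x = scale2 (fls_X_intpow s) x"
  have "1 = wedge ((1, 0) :: bit fls \<times> bit fls) (0, 1)" by (simp add: wedge_def)
  also have "\<dots> = wedge ((mat22_vec A ^^ P) (1, 0)) ((mat22_vec A ^^ P) (0, 1))"
    by (rule wedge_funpow_mat22_vec[OF det, symmetric])
  also have "\<dots> = fls_X_intpow (s + s)"
    by (simp add: scalar wedge_def fls_X_intpow_times_fls_X_intpow)
  finally have "fls_X_intpow (s + s) = (1 :: bit fls)" by simp
  hence "s = 0" by (simp add: fls_X_intpow_eq_1_iff)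
  thus ?thesis using scalar by simp
next
  fix \<mu> assume eig: "mat22_vec A w = scale2 \<mu> w"
  have "scale2 (\<mu> ^ P) w = scale2 (fls_X_intpow s) w"
    using ret by (simp add: funpow_mat22_vec_eigenvector[OF eig])
  then obtain k where k: "\<mu> = fls_X_intpow k"
    using bit_fls_power_eq_X_intpow[OF P] scale2_cancel[OF w] by metis
  show ?thesis
  proof (cases "k = 0")
    case True
    with k have "\<mu> = 1" by simp
    hence "mat22_trace A = 0"
      using eigenvalue_mat22_char_poly[OF eig w] det by (simp add: bit_fls_add_eq_0_iff)
    hence "mat22_vec A (mat22_vec A x) = x" for x
      using det by (cases x) (simp add: mat22_cayley_hamilton scale2_def)
    thus ?thesis by blast
  qed (use eig k in auto)
qed

subsection \<open>Laurent polynomials as Laurent series\<close>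

definition lpoly_fls :: "lpoly \<Rightarrow> bit fls" where
  "lpoly_fls p = Abs_fls (\<lambda>n. of_bool (p n))"

lemma lpoly_fls_nth:
  assumes "is_lpoly p"
  shows "fls_nth (lpoly_fls p) n = of_bool (p n)"
proof -
  have "{n::nat. p (- int n)} \<subseteq> (\<lambda>k. nat (- k)) ` {n. p n}"
    by (auto intro!: image_eqI[where x="- int _"])
  hence "finite {n::nat. p (- int n)}"
    using assms finite_surj by (auto simp: is_lpoly_def)
  hence "\<forall>\<^sub>\<infinity> n::nat. (of_bool (p (- int n)) :: bit) = 0"
    by (simp add: eventually_cofinite)
  thus ?thesis unfolding lpoly_fls_def by simp
qed

lemma lpoly_fls_inject:
  assumes "is_lpoly p" "is_lpoly q"
  shows "lpoly_fls p = lpoly_fls q \<longleftrightarrow> p = q"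
proof
  assume "lpoly_fls p = lpoly_fls q"
  hence "fls_nth (lpoly_fls p) n = fls_nth (lpoly_fls q) n" for n by simp
  thus "p = q" using assms by (simp add: lpoly_fls_nth fun_eq_iff of_bool_eq_iff)
qed simp

lemma is_lpoly_lzero [simp]: "is_lpoly lzero"
  by (simp add: is_lpoly_def lzero_def)

lemma is_lpoly_lmon [simp]: "is_lpoly (lmon k)"
  by (simp add: is_lpoly_def lmon_def)

lemma is_lpoly_lone [simp]: "is_lpoly lone"
  by (simp add: lone_def)

lemma is_lpoly_ladd: "is_lpoly p \<Longrightarrow> is_lpoly q \<Longrightarrow> is_lpoly (ladd p q)"
  unfolding is_lpoly_def ladd_def
  by (rule finite_subset[of _ "{n. p n} \<union> {n. q n}"]) auto

lemma lmul_imp_ex: "lmul p q n \<Longrightarrow> \<exists>i. p i \<and> q (n - i)"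
  unfolding lmul_def by (metis (mono_tags, lifting) card.empty empty_Collect_eq even_zero)

lemma is_lpoly_lmul:
  assumes "is_lpoly p" "is_lpoly q"
  shows "is_lpoly (lmul p q)"
proof -
  have "{n. lmul p q n} \<subseteq> (\<lambda>(i, j). i + j) ` ({n. p n} \<times> {n. q n})"
  proof
    fix n assume "n \<in> {n. lmul p q n}"
    then obtain i where "p i" "q (n - i)" using lmul_imp_ex by blast
    thus "n \<in> (\<lambda>(i, j). i + j) ` ({n. p n} \<times> {n. q n})"
      by (auto intro!: image_eqI[where x="(i, n - i)"])
  qed
  thus ?thesis using assms unfolding is_lpoly_def
    by (meson finite_SigmaI finite_imageI finite_subset)
qed

lemma lmul_lmon: "lmul (lmon s) p = (\<lambda>n. p (n - s))"
proof
  fix n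
  have "{i. lmon s i \<and> p (n - i)} = (if p (n - s) then {s} else {})"
    by (auto simp: lmon_def)
  thus "lmul (lmon s) p n = p (n - s)" by (simp add: lmul_def)
qed

lemma lpoly_fls_lzero [simp]: "lpoly_fls lzero = 0"
  by (rule fls_eqI) (simp add: lpoly_fls_nth, simp add: lzero_def)

lemma lpoly_fls_lmon: "lpoly_fls (lmon k) = fls_X_intpow k"
  by (rule fls_eqI) (simp add: lpoly_fls_nth, simp add: lmon_def)

lemma lpoly_fls_lone [simp]: "lpoly_fls lone = 1"
  by (simp add: lone_def lpoly_fls_lmon)

lemma lpoly_fls_ladd:
  assumes "is_lpoly p" "is_lpoly q"
  shows "lpoly_fls (ladd p q) = lpoly_fls p + lpoly_fls q"
  by (rule fls_eqI) (simp add: lpoly_fls_nth assms is_lpoly_ladd, auto simp: ladd_def)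

lemma lpoly_fls_lmul:
  assumes "is_lpoly p" "is_lpoly q"
  shows "lpoly_fls (lmul p q) = lpoly_fls p * lpoly_fls q"
proof (rule fls_eqI)
  fix n
  define f g where "f = lpoly_fls p" and "g = lpoly_fls q"
  define df dg where "df = fls_subdegree f" and "dg = fls_subdegree g"
  have f: "fls_nth f i = of_bool (p i)" and g: "fls_nth g i = of_bool (q i)" for i
    using assms by (simp_all add: f_def g_def lpoly_fls_nth)
  have "fls_nth (f * g) n = (\<Sum>i = df..n - dg. fls_nth f i * fls_nth g (n - i))"
    unfolding df_def dg_def by (rule fls_times_nth(2))
  also have "\<dots> = (\<Sum>i \<in> {i. p i \<and> q (n - i)}. 1)"
  proof (rule sum.mono_neutral_cong_right)
    show "{i. p i \<and> q (n - i)} \<subseteq> {df..n - dg}"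
    proof
      fix i assume "i \<in> {i. p i \<and> q (n - i)}"
      hence "df \<le> i" "dg \<le> n - i"
        unfolding df_def dg_def by (auto intro: fls_subdegree_leI simp: f g)
      thus "i \<in> {df..n - dg}" by simp
    qed
  qed (auto simp: f g)
  also have "\<dots> = of_bool (lmul p q n)"
    by (simp add: lmul_def of_nat_bit)
  finally show "fls_nth (lpoly_fls (lmul p q)) n = fls_nth (lpoly_fls p * lpoly_fls q) n"
    using assms is_lpoly_lmul by (simp add: lpoly_fls_nth f_def g_def)
qed

fun lvec_fls :: "vec2 \<Rightarrow> bit fls \<times> bit fls" where
  "lvec_fls (x, y) = (lpoly_fls x, lpoly_fls y)"

fun lmat_fls :: "mat2 \<Rightarrow> bit fls mat22" where
  "lmat_fls (a, b, c, d) = (lpoly_fls a, lpoly_fls b, lpoly_fls c, lpoly_fls d)"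

lemma is_lvec_Pair [simp]: "is_lvec (x, y) \<longleftrightarrow> is_lpoly x \<and> is_lpoly y"
  by (simp add: is_lvec_def)

lemma lvec_fls_inject:
  "is_lvec v \<Longrightarrow> is_lvec w \<Longrightarrow> lvec_fls v = lvec_fls w \<longleftrightarrow> v = w"
  by (cases v; cases w) (simp add: lpoly_fls_inject)

lemma lvec_fls_eqI: "is_lvec v \<Longrightarrow> is_lvec w \<Longrightarrow> lvec_fls v = lvec_fls w \<Longrightarrow> v = w"
  by (simp add: lvec_fls_inject)

lemma lvec_fls_eq_0_iff: "is_lvec v \<Longrightarrow> lvec_fls v = 0 \<longleftrightarrow> v = vzero"
  using lvec_fls_inject[of v vzero] by (simp add: vzero_def zero_prod_def)

lemma is_lvec_mat_vec: "is_lmat B \<Longrightarrow> is_lvec v \<Longrightarrow> is_lvec (mat_vec B v)"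
  by (cases B; cases v) (simp add: is_lpoly_ladd is_lpoly_lmul)

lemma lvec_fls_mat_vec:
  "is_lmat B \<Longrightarrow> is_lvec v \<Longrightarrow> lvec_fls (mat_vec B v) = mat22_vec (lmat_fls B) (lvec_fls v)"
  by (cases B; cases v) (simp add: is_lpoly_ladd is_lpoly_lmul lpoly_fls_ladd lpoly_fls_lmul)

lemma is_lmat_mat_mul: "is_lmat B \<Longrightarrow> is_lmat C \<Longrightarrow> is_lmat (mat_mul B C)"
  by (cases B; cases C) (simp add: is_lpoly_ladd is_lpoly_lmul)

lemma lmat_fls_mat_mul:
  "is_lmat B \<Longrightarrow> is_lmat C \<Longrightarrow> lmat_fls (mat_mul B C) = mat22_mul (lmat_fls B) (lmat_fls C)"
  by (cases B; cases C) (simp add: is_lpoly_ladd is_lpoly_lmul lpoly_fls_ladd lpoly_fls_lmul)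

lemma is_lmat_mat_id: "is_lmat mat_id"
  by (simp add: mat_id_def)

lemma lmat_fls_mat_id: "lmat_fls mat_id = (1, 0, 0, 1)"
  by (simp add: mat_id_def)

lemma mat_vec_mat_id:
  assumes "is_lvec v"
  shows "mat_vec mat_id v = v"
proof -
  have "lvec_fls (mat_vec mat_id v) = lvec_fls v"
    using assms by (cases "lvec_fls v") (simp add: lvec_fls_mat_vec is_lmat_mat_id lmat_fls_mat_id)
  thus ?thesis using assms by (simp add: lvec_fls_inject is_lvec_mat_vec is_lmat_mat_id)
qed

lemma mat_vec_mat_mul:
  assumes "is_lmat B" "is_lmat C" "is_lvec v"
  shows "mat_vec (mat_mul B C) v = mat_vec B (mat_vec C v)"
proof -
  have "lvec_fls (mat_vec (mat_mul B C) v) = lvec_fls (mat_vec B (mat_vec C v))"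
    using assms by (simp add: is_lvec_mat_vec is_lmat_mat_mul lvec_fls_mat_vec
        lmat_fls_mat_mul mat22_vec_mat22_mul)
  thus ?thesis using assms by (simp add: lvec_fls_inject is_lvec_mat_vec is_lmat_mat_mul)
qed

lemma is_lmat_mat_pow: "is_lmat A \<Longrightarrow> is_lmat (mat_pow A m)"
  by (induct m) (simp_all add: is_lmat_mat_id is_lmat_mat_mul)

lemma lvec_fls_mat_pow:
  assumes "is_lmat A" "is_lvec v"
  shows "lvec_fls (mat_vec (mat_pow A m) v) = (mat22_vec (lmat_fls A) ^^ m) (lvec_fls v)"
proof (induct m)
  case 0
  show ?case
    using assms(2) by (cases "lvec_fls v") (simp add: lvec_fls_mat_vec is_lmat_mat_id lmat_fls_mat_id)
next
  case (Suc m)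
  thus ?case using assms
    by (simp add: lvec_fls_mat_vec is_lmat_mat_mul is_lmat_mat_pow lmat_fls_mat_mul
        mat22_vec_mat22_mul)
qed

lemma is_lvec_mat_pow: "is_lmat A \<Longrightarrow> is_lvec v \<Longrightarrow> is_lvec (mat_vec (mat_pow A m) v)"
  by (simp add: is_lvec_mat_vec is_lmat_mat_pow)

lemma mat22_det_lmat_fls: "is_lmat A \<Longrightarrow> mat22_det (lmat_fls A) = lpoly_fls (mat_det A)"
  by (cases A) (simp add: is_lpoly_lmul lpoly_fls_ladd lpoly_fls_lmul)

lemma periodic_if_funpow_id:
  assumes A: "is_lmat A" and P: "0 < P" and id: "\<forall>x. (mat22_vec (lmat_fls A) ^^ P) x = x"
  shows "periodic A"
proof -
  obtain a b c d where B: "mat_pow A P = (a, b, c, d)" by (cases "mat_pow A P") auto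
  have B_lmat: "is_lmat (a, b, c, d)" using is_lmat_mat_pow[OF A, of P] B by simp
  have "lvec_fls (mat_vec (mat_pow A P) v) = lvec_fls v" if "is_lvec v" for v
    using lvec_fls_mat_pow[OF A that] id by metis
  from this[of "(lone, lzero)"] this[of "(lzero, lone)"]
  have "lpoly_fls a = lpoly_fls lone" "lpoly_fls c = lpoly_fls lzero"
    "lpoly_fls b = lpoly_fls lzero" "lpoly_fls d = lpoly_fls lone"
    using B B_lmat by (simp_all add: lvec_fls_mat_vec is_lpoly_lmul lpoly_fls_ladd lpoly_fls_lmul)
  hence "a = lone" "c = lzero" "b = lzero" "d = lone"
    using B_lmat lpoly_fls_inject is_lpoly_lone is_lpoly_lzero by (metis is_lmat.simps)+
  hence "mat_pow A P = mat_id" using B by (simp add: mat_id_def)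
  thus ?thesis using P unfolding periodic_def by (intro exI[of _ P]) simp
qed

lemma mat_vec_if_fls_eigenvector:
  assumes A: "is_lmat A" and w: "is_lvec w"
    and eig: "mat22_vec (lmat_fls A) (lvec_fls w) = scale2 (fls_X_intpow k) (lvec_fls w)"
  shows "mat_vec A w = (lmul (lmon k) (fst w), lmul (lmon k) (snd w))"
proof -
  have "lvec_fls (mat_vec A w) = lvec_fls (lmul (lmon k) (fst w), lmul (lmon k) (snd w))"
    using w eig by (cases w) (simp add: lvec_fls_mat_vec[OF A] lpoly_fls_lmul lpoly_fls_lmon)
  moreover have "is_lvec (lmul (lmon k) (fst w), lmul (lmon k) (snd w))"
    using w by (simp add: is_lvec_def is_lpoly_lmul)
  ultimately show ?thesis using lvec_fls_inject is_lvec_mat_vec[OF A w] by blast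
qed

definition vsupp :: "vec2 \<Rightarrow> int set" where
  "vsupp v = {n. fst v n \<or> snd v n}"

definition vshift :: "int \<Rightarrow> vec2 \<Rightarrow> vec2" where
  "vshift s v = (\<lambda>n. fst v (n - s), \<lambda>n. snd v (n - s))"

definition vadd :: "vec2 \<Rightarrow> vec2 \<Rightarrow> vec2" where
  "vadd v w = (ladd (fst v) (fst w), ladd (snd v) (snd w))"

definition vrestrict :: "(int \<Rightarrow> bool) \<Rightarrow> vec2 \<Rightarrow> vec2" where
  "vrestrict P v = (\<lambda>n. P n \<and> fst v n, \<lambda>n. P n \<and> snd v n)"

lemma pauli_weight_eq_card_vsupp: "pauli_weight v = card (vsupp v)"
  by (simp add: pauli_weight_def vsupp_def)

lemma finite_vsupp: "is_lvec v \<Longrightarrow> finite (vsupp v)"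
proof -
  have "vsupp v = {n. fst v n} \<union> {n. snd v n}" by (auto simp: vsupp_def)
  thus "is_lvec v \<Longrightarrow> finite (vsupp v)" by (simp add: is_lvec_def is_lpoly_def)
qed

lemma vsupp_eq_empty_iff: "vsupp v = {} \<longleftrightarrow> v = vzero"
  by (cases v) (auto simp: vsupp_def vzero_def lzero_def fun_eq_iff)

lemma vshift_vshift: "vshift a (vshift b v) = vshift (a + b) v"
  by (simp add: vshift_def algebra_simps)

lemma vshift_0 [simp]: "vshift 0 v = v"
  by (simp add: vshift_def)

lemma vshift_eq_lmul_lmon: "vshift s v = (lmul (lmon s) (fst v), lmul (lmon s) (snd v))"
  by (simp add: vshift_def lmul_lmon)

lemma lvec_fls_vshift: "is_lvec v \<Longrightarrow> lvec_fls (vshift s v) = scale2 (fls_X_intpow s) (lvec_fls v)"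
  by (cases v) (simp add: vshift_eq_lmul_lmon lpoly_fls_lmul lpoly_fls_lmon)

lemma vsupp_vshift: "vsupp (vshift s v) = (\<lambda>n. n + s) ` vsupp v"
proof (rule set_eqI)
  fix x
  show "x \<in> vsupp (vshift s v) \<longleftrightarrow> x \<in> (\<lambda>n. n + s) ` vsupp v"
    by (auto simp: vsupp_def vshift_def image_iff intro!: exI[of _ "x - s"])
qed

lemma is_lvec_vadd: "is_lvec v \<Longrightarrow> is_lvec w \<Longrightarrow> is_lvec (vadd v w)"
  by (simp add: is_lvec_def vadd_def is_lpoly_ladd)

lemma lvec_fls_vadd: "is_lvec v \<Longrightarrow> is_lvec w \<Longrightarrow> lvec_fls (vadd v w) = lvec_fls v + lvec_fls w"
  by (cases v; cases w) (simp add: vadd_def lpoly_fls_ladd)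

lemma vsupp_vadd_disjoint: "vsupp v \<inter> vsupp w = {} \<Longrightarrow> vsupp (vadd v w) = vsupp v \<union> vsupp w"
  by (auto simp: vsupp_def vadd_def ladd_def)

lemma is_lvec_vrestrict: "is_lvec v \<Longrightarrow> is_lvec (vrestrict P v)"
  unfolding is_lvec_def is_lpoly_def vrestrict_def by (auto elim: finite_subset[rotated])

lemma vsupp_vrestrict: "vsupp (vrestrict P v) = {n \<in> vsupp v. P n}"
  by (auto simp: vsupp_def vrestrict_def)

lemma vadd_vrestrict: "vadd (vrestrict P v) (vrestrict (\<lambda>n. \<not> P n) v) = v"
  by (cases v) (auto simp: vadd_def vrestrict_def ladd_def)

lemma mat_vec_mat_pow_add:
  assumes "is_lmat A" "is_lvec v"
  shows "mat_vec (mat_pow A (i + j)) v = mat_vec (mat_pow A i) (mat_vec (mat_pow A j) v)"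
  using assms by (intro lvec_fls_eqI) (simp_all add: is_lvec_mat_pow lvec_fls_mat_pow funpow_add)

lemma mat_vec_mat_pow_vadd:
  assumes "is_lmat A" "is_lvec v" "is_lvec w"
  shows "mat_vec (mat_pow A i) (vadd v w) = vadd (mat_vec (mat_pow A i) v) (mat_vec (mat_pow A i) w)"
  using assms by (intro lvec_fls_eqI)
    (simp_all add: is_lvec_mat_pow is_lvec_vadd lvec_fls_mat_pow lvec_fls_vadd funpow_mat22_vec_add)

lemma mat_vec_mat_pow_nonzero:
  assumes "is_lmat A" "mat_det A = lone" "is_lvec v" "v \<noteq> vzero"
  shows "mat_vec (mat_pow A i) v \<noteq> vzero"
proof
  assume zero: "mat_vec (mat_pow A i) v = vzero"
  have "(mat22_vec (lmat_fls A) ^^ i) (lvec_fls v) = lvec_fls (mat_vec (mat_pow A i) v)"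
    using assms by (simp add: lvec_fls_mat_pow)
  also have "\<dots> = 0" by (simp add: zero vzero_def zero_prod_def)
  finally have "(mat22_vec (lmat_fls A) ^^ i) (lvec_fls v) = 0" .
  moreover have "mat22_det (lmat_fls A) = 1" using assms by (simp add: mat22_det_lmat_fls)
  ultimately have "lvec_fls v = 0" by (rule funpow_mat22_vec_eq_0_imp[rotated])
  thus False using assms by (simp add: lvec_fls_eq_0_iff)
qed

lemma fractal_is_lmat: "fractal A \<Longrightarrow> is_lmat A"
  by (cases A) (simp add: fractal_def)

lemma fractal_det: "fractal A \<Longrightarrow> mat_det A = lone"
  by (cases A) (simp add: fractal_def)

lemma fractal_no_shifted_return:
  assumes frac: "fractal A" and w: "is_lvec w" "w \<noteq> vzero" and P: "0 < P"
  shows "mat_vec (mat_pow A P) w \<noteq> vshift s w"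
proof
  assume ret: "mat_vec (mat_pow A P) w = vshift s w"
  have A: "is_lmat A" using frac by (rule fractal_is_lmat)
  have det: "mat22_det (lmat_fls A) = 1"
    using frac by (simp add: mat22_det_lmat_fls A fractal_det)
  have nz: "lvec_fls w \<noteq> 0" using w by (simp add: lvec_fls_eq_0_iff)
  have "(mat22_vec (lmat_fls A) ^^ P) (lvec_fls w) = scale2 (fls_X_intpow s) (lvec_fls w)"
    using arg_cong[OF ret, of lvec_fls] by (simp add: lvec_fls_mat_pow A w lvec_fls_vshift)
  from bit_fls_mat22_shifted_return[OF det nz P this] show False
  proof (elim disjE exE conjE)
    assume "\<forall>x. (mat22_vec (lmat_fls A) ^^ P) x = x"
    hence "periodic A" by (rule periodic_if_funpow_id[OF A P])
    thus False using frac by (simp add: fractal_def)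
  next
    assume "\<forall>x. mat22_vec (lmat_fls A) (mat22_vec (lmat_fls A) x) = x"
    hence "\<forall>x. (mat22_vec (lmat_fls A) ^^ 2) x = x" by (simp add: numeral_2_eq_2)
    hence "periodic A" by (rule periodic_if_funpow_id[OF A, rotated]) simp
    thus False using frac by (simp add: fractal_def)
  next
    fix k assume "k \<noteq> 0" "mat22_vec (lmat_fls A) (lvec_fls w) = scale2 (fls_X_intpow k) (lvec_fls w)"
    hence "has_glider A"
      using mat_vec_if_fls_eigenvector[OF A w(1)] w unfolding has_glider_def by blast
    thus False using frac by (simp add: fractal_def)
  qed
qed

subsection \<open>Growth of the Pauli weight\<close>

definition has_range :: "mat2 \<Rightarrow> int \<Rightarrow> bool" where
  "has_range B R \<longleftrightarrow>
     (\<forall>v n. is_lvec v \<longrightarrow> n \<in> vsupp (mat_vec B v) \<longrightarrow> (\<exists>m \<in> vsupp v. \<bar>n - m\<bar> \<le> R))"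

lemma is_lmat_has_range:
  assumes "is_lmat A"
  obtains R where "0 \<le> R" "has_range A R"
proof -
  obtain a b c d where A: "A = (a, b, c, d)" by (cases A) auto
  define U where "U = {n. a n} \<union> {n. b n} \<union> {n. c n} \<union> {n. d n}"
  have "finite U" using assms by (simp add: U_def A is_lpoly_def)
  define R where "R = Max (insert 0 (abs ` U))"
  have U_R: "\<bar>i\<bar> \<le> R" if "i \<in> U" for i using \<open>finite U\<close> that by (simp add: R_def)
  have "has_range A R"
    unfolding has_range_def
  proof (intro allI impI)
    fix v n assume "n \<in> vsupp (mat_vec A v)"
    then obtain p q where "lmul p q n" "p \<in> {a, b, c, d}" "q \<in> {fst v, snd v}"
      by (cases v) (auto simp: vsupp_def A ladd_def)
    then obtain i where "p i" "q (n - i)" using lmul_imp_ex by blast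
    hence "n - i \<in> vsupp v" "\<bar>n - (n - i)\<bar> \<le> R"
      using \<open>p \<in> _\<close> \<open>q \<in> _\<close> U_R by (auto simp: vsupp_def U_def)
    thus "\<exists>m \<in> vsupp v. \<bar>n - m\<bar> \<le> R" by blast
  qed
  moreover have "0 \<le> R" using \<open>finite U\<close> by (simp add: R_def)
  ultimately show ?thesis using that by blast
qed

lemma has_range_mat_pow:
  assumes A: "is_lmat A" and R: "has_range A R"
  shows "has_range (mat_pow A k) (int k * R)"
proof (induct k)
  case 0
  show ?case by (auto simp: has_range_def mat_vec_mat_id)
next
  case (Suc k)
  show ?case
    unfolding has_range_def
  proof (intro allI impI)
    fix v n assume v: "is_lvec v" and "n \<in> vsupp (mat_vec (mat_pow A (Suc k)) v)"
    hence "n \<in> vsupp (mat_vec A (mat_vec (mat_pow A k) v))"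
      by (simp add: mat_vec_mat_mul A is_lmat_mat_pow)
    then obtain m' where "m' \<in> vsupp (mat_vec (mat_pow A k) v)" "\<bar>n - m'\<bar> \<le> R"
      using R is_lvec_mat_pow[OF A v, of k] unfolding has_range_def by blast
    moreover obtain m where "m \<in> vsupp v" "\<bar>m' - m\<bar> \<le> int k * R"
      using Suc v calculation(1) unfolding has_range_def by blast
    ultimately show "\<exists>m \<in> vsupp v. \<bar>n - m\<bar> \<le> int (Suc k) * R"
      by (intro bexI[of _ m]) (auto simp: algebra_simps)
  qed
qed

definition has_gap :: "int \<Rightarrow> int set \<Rightarrow> bool" where
  "has_gap G X \<longleftrightarrow> (\<exists>g. (\<exists>x \<in> X. x \<le> g) \<and> (\<exists>x \<in> X. g + G < x) \<and> (\<forall>x \<in> X. x \<le> g \<or> g + G < x))"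

lemma span_le_if_no_gap:
  fixes X :: "int set"
  assumes "finite X" "X \<noteq> {}" "\<not> has_gap G X"
  shows "Max X - Min X \<le> int (card X - 1) * G"
  using assms
proof (induct X rule: finite_linorder_max_induct)
  case (insert b A)
  show ?case
  proof (cases "A = {}")
    case False
    have "\<not> has_gap G A"
    proof
      assume "has_gap G A"
      then obtain g where "\<exists>x \<in> A. x \<le> g" "\<exists>x \<in> A. g + G < x" "\<forall>x \<in> A. x \<le> g \<or> g + G < x"
        unfolding has_gap_def by blast
      moreover have "g + G < b" using calculation(2) insert(2) by force
      ultimately have "has_gap G (insert b A)" unfolding has_gap_def by blast
      thus False using insert(5) by blast
    qed
    hence IH: "Max A - Min A \<le> int (card A - 1) * G" using insert(1,3) False by blast
    have "b \<le> Max A + G"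
    proof (rule ccontr)
      assume "\<not> b \<le> Max A + G"
      hence "has_gap G (insert b A)"
        using insert(1) False unfolding has_gap_def
        by (intro exI[of _ "Max A"]) (auto intro: bexI[of _ "Max A"])
      thus False using insert(5) by blast
    qed
    moreover have "Max (insert b A) = b" "Min (insert b A) = Min A"
      using insert(1,2) False by (auto intro!: Max_eqI Min_eqI simp: less_imp_le)
    moreover have "card (insert b A) = Suc (card A)" "card A \<ge> 1"
      using insert(1,2) False by (auto simp: Suc_le_eq card_gt_0_iff)
    ultimately show ?thesis using IH by (simp add: of_nat_diff algebra_simps)
  qed simp
qed simp

lemma pauli_weight_vadd_disjoint:
  assumes "is_lvec v" "is_lvec w" "vsupp v \<inter> vsupp w = {}"
  shows "pauli_weight (vadd v w) = pauli_weight v + pauli_weight w"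
  using assms by (simp add: pauli_weight_eq_card_vsupp vsupp_vadd_disjoint card_Un_disjoint finite_vsupp)

lemma pauli_weight_pos: "is_lvec v \<Longrightarrow> v \<noteq> vzero \<Longrightarrow> 0 < pauli_weight v"
  by (simp add: pauli_weight_eq_card_vsupp card_gt_0_iff finite_vsupp vsupp_eq_empty_iff)

lemma finite_vsupp_subset: "finite {v. vsupp v \<subseteq> {0..L}}"
proof -
  have "{v. vsupp v \<subseteq> {0..L}} \<subseteq> (\<lambda>(X, Y). (\<lambda>n. n \<in> X, \<lambda>n. n \<in> Y)) ` (Pow {0..L} \<times> Pow {0..L})"
  proof
    fix v assume "v \<in> {v. vsupp v \<subseteq> {0..L}}"
    thus "v \<in> (\<lambda>(X, Y). (\<lambda>n. n \<in> X, \<lambda>n. n \<in> Y)) ` (Pow {0..L} \<times> Pow {0..L})"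
      by (intro image_eqI[of _ _ "({n. fst v n}, {n. snd v n})"]) (auto simp: vsupp_def)
  qed
  thus ?thesis by (rule finite_subset) simp
qed

text \<open>Pigeonhole: translated to start at \<open>0\<close>, vectors of span at most \<open>L\<close> take only finitely many
  values.\<close>
lemma vshift_repeat_if_span_bounded:
  assumes span: "\<And>j. j \<le> card {v. vsupp v \<subseteq> {0..L}} \<Longrightarrow>
      finite (vsupp (u j)) \<and> vsupp (u j) \<noteq> {} \<and> Max (vsupp (u j)) - Min (vsupp (u j)) \<le> L"
  obtains i j s where "i < j" "u j = vshift s (u i)"
proof -
  define S where "S = {v. vsupp v \<subseteq> {0..L}}"
  define f where "f j = vshift (- Min (vsupp (u j))) (u j)" for j
  have "f j \<in> S" if "j \<le> card S" for j
  proof -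
    have "finite (vsupp (u j))" "Max (vsupp (u j)) - Min (vsupp (u j)) \<le> L"
      using span that by (simp_all add: S_def)
    hence "vsupp (f j) \<subseteq> {0..L}"
      by (auto simp: f_def vsupp_vshift) (smt (verit) Max_ge)
    thus ?thesis by (simp add: S_def)
  qed
  hence "f ` {..card S} \<subseteq> S" by auto
  hence "\<not> inj_on f {..card S}"
    using card_inj_on_le[of f "{..card S}" S] finite_vsupp_subset by (auto simp: S_def)
  then obtain i j where "i \<noteq> j" "f i = f j" unfolding inj_on_def by blast
  then obtain i j where "i < j" "f i = f j" by (metis linorder_neqE_nat)
  have "u j = vshift (Min (vsupp (u j))) (f j)" by (simp add: f_def vshift_vshift)
  also have "\<dots> = vshift (Min (vsupp (u j))) (f i)" using \<open>f i = f j\<close> by simp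
  also have "\<dots> = vshift (Min (vsupp (u j)) - Min (vsupp (u i))) (u i)"
    by (simp add: f_def vshift_vshift)
  finally show ?thesis using that \<open>i < j\<close> by blast
qed

text \<open>A gap of width \<open>2MR\<close> in the support splits \<open>v\<close> into two parts whose evolutions stay disjoint
  for \<open>M\<close> steps; within them the left part alone reaches weight \<open>K + 1\<close>, and the right part
  adds at least one more site.\<close>
lemma no_gap_if_weight_bounded:
  assumes A: "is_lmat A" "mat_det A = lone" and R: "0 \<le> R" "has_range A R"
    and grow: "\<And>w. is_lvec w \<Longrightarrow> w \<noteq> vzero \<Longrightarrow>
      \<exists>i \<le> M. K < pauli_weight (mat_vec (mat_pow A i) w)"
    and v: "is_lvec v"
    and small: "\<And>i. i \<le> M \<Longrightarrow> pauli_weight (mat_vec (mat_pow A i) v) \<le> Suc K"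
  shows "\<not> has_gap (2 * int M * R) (vsupp v)"
proof
  assume "has_gap (2 * int M * R) (vsupp v)"
  then obtain g where left: "\<exists>n \<in> vsupp v. n \<le> g" and right: "\<exists>n \<in> vsupp v. g + 2 * int M * R < n"
    and gap: "\<forall>n \<in> vsupp v. n \<le> g \<or> g + 2 * int M * R < n"
    unfolding has_gap_def by blast
  define v1 v2 where "v1 = vrestrict (\<lambda>n. n \<le> g) v" and "v2 = vrestrict (\<lambda>n. \<not> n \<le> g) v"
  let ?T = "\<lambda>i w. mat_vec (mat_pow A i) w"
  have v12: "is_lvec v1" "is_lvec v2" using v by (simp_all add: v1_def v2_def is_lvec_vrestrict)
  have "0 \<le> int M * R" using R(1) by simp
  hence "v1 \<noteq> vzero" "v2 \<noteq> vzero"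
    using left right by (fastforce simp: v1_def v2_def vsupp_vrestrict simp flip: vsupp_eq_empty_iff)+
  then obtain i where "i \<le> M" and weight1: "K < pauli_weight (?T i v1)"
    using grow v12 by blast
  have "int i * R \<le> int M * R" using \<open>i \<le> M\<close> R(1) by (simp add: mult_right_mono)
  have near: "\<exists>m \<in> vsupp w. \<bar>n - m\<bar> \<le> int M * R" if wn: "is_lvec w" "n \<in> vsupp (?T i w)" for w n
  proof -
    obtain m where "m \<in> vsupp w" "\<bar>n - m\<bar> \<le> int i * R"
      using has_range_mat_pow[OF A(1) R(2), of i] wn unfolding has_range_def by blast
    thus ?thesis using \<open>int i * R \<le> int M * R\<close> by force
  qed
  have "n \<le> g + int M * R" if "n \<in> vsupp (?T i v1)" for n
    using near[OF v12(1) that] by (auto simp: v1_def vsupp_vrestrict)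
  moreover have "g + int M * R < n" if "n \<in> vsupp (?T i v2)" for n
    using near[OF v12(2) that] gap by (force simp: v2_def vsupp_vrestrict)
  ultimately have disjoint: "vsupp (?T i v1) \<inter> vsupp (?T i v2) = {}" by force
  have "0 < pauli_weight (?T i v2)"
    using v12 \<open>v2 \<noteq> vzero\<close> A by (simp add: pauli_weight_pos is_lvec_mat_pow mat_vec_mat_pow_nonzero)
  moreover have "?T i v = vadd (?T i v1) (?T i v2)"
    using mat_vec_mat_pow_vadd[OF A(1) v12] vadd_vrestrict[of "\<lambda>n. n \<le> g" v]
    by (simp add: v1_def v2_def)
  hence "pauli_weight (?T i v) = pauli_weight (?T i v1) + pauli_weight (?T i v2)"
    using v12 A disjoint by (simp add: pauli_weight_vadd_disjoint is_lvec_mat_pow)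
  ultimately show False using small[OF \<open>i \<le> M\<close>] weight1 by linarith
qed

lemma pauli_weight_eventually_exceeds:
  assumes A: "is_lmat A" "mat_det A = lone"
    and no_return: "\<And>w P s. is_lvec w \<Longrightarrow> w \<noteq> vzero \<Longrightarrow> 0 < P \<Longrightarrow>
      mat_vec (mat_pow A P) w \<noteq> vshift s w"
  shows "\<exists>M. \<forall>v. is_lvec v \<longrightarrow> v \<noteq> vzero \<longrightarrow>
    (\<exists>j \<le> M. K < pauli_weight (mat_vec (mat_pow A j) v))"
proof (induct K)
  case 0
  show ?case by (intro exI[of _ 0]) (simp add: pauli_weight_pos mat_vec_mat_id)
next
  case (Suc K)
  let ?T = "\<lambda>i w. mat_vec (mat_pow A i) w"
  obtain M where grow: "\<And>w. is_lvec w \<Longrightarrow> w \<noteq> vzero \<Longrightarrow> \<exists>i \<le> M. K < pauli_weight (?T i w)"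
    using Suc by blast
  obtain R where R: "0 \<le> R" "has_range A R" using is_lmat_has_range[OF A(1)] by blast
  define G where "G = 2 * int M * R"
  define L where "L = int K * G"
  define N where "N = card {w. vsupp w \<subseteq> {0..L}}"
  have "\<exists>j \<le> N + M. Suc K < pauli_weight (?T j v)" if v: "is_lvec v" "v \<noteq> vzero" for v
  proof (rule ccontr)
    assume "\<not> ?thesis"
    hence small: "\<And>j. j \<le> N + M \<Longrightarrow> pauli_weight (?T j v) \<le> Suc K" by force
    have "finite (vsupp (?T j v)) \<and> vsupp (?T j v) \<noteq> {} \<and>
        Max (vsupp (?T j v)) - Min (vsupp (?T j v)) \<le> L" if "j \<le> N" for j
    proof -
      have lv: "is_lvec (?T j v)" using A v by (simp add: is_lvec_mat_pow)
      have fin: "finite (vsupp (?T j v))" using lv by (rule finite_vsupp)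
      have ne: "vsupp (?T j v) \<noteq> {}"
        using A v by (simp add: vsupp_eq_empty_iff mat_vec_mat_pow_nonzero)
      have "\<not> has_gap G (vsupp (?T j v))"
        unfolding G_def
      proof (rule no_gap_if_weight_bounded[OF A R grow lv])
        fix i assume "i \<le> M"
        thus "pauli_weight (?T i (?T j v)) \<le> Suc K"
          using small[of "i + j"] \<open>j \<le> N\<close> A v by (simp add: mat_vec_mat_pow_add)
      qed
      hence "Max (vsupp (?T j v)) - Min (vsupp (?T j v)) \<le> int (card (vsupp (?T j v)) - 1) * G"
        by (rule span_le_if_no_gap[OF fin ne])
      also have "\<dots> \<le> L"
        using small[of j] \<open>j \<le> N\<close> R(1) unfolding L_def G_def
        by (intro mult_right_mono) (simp_all add: pauli_weight_eq_card_vsupp)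
      finally show ?thesis using fin ne by blast
    qed
    then obtain i j s where "i < j" "?T j v = vshift s (?T i v)"
      unfolding N_def by (rule vshift_repeat_if_span_bounded)
    hence "?T (j - i) (?T i v) = vshift s (?T i v)"
      using mat_vec_mat_pow_add[OF A(1) v(1), of "j - i" i] by simp
    moreover have "is_lvec (?T i v)" "?T i v \<noteq> vzero"
      using A v by (simp_all add: is_lvec_mat_pow mat_vec_mat_pow_nonzero)
    ultimately show False using no_return \<open>i < j\<close> by simp
  qed
  thus ?case by blast
qed

theorem lemmaA2:
  fixes A :: mat2 and \<xi> :: vec2
  assumes "fractal A" and "is_lvec \<xi>" and "\<xi> \<noteq> vzero"
  shows "\<forall>k::nat. \<exists>m::nat. pauli_weight (mat_vec (mat_pow A m) \<xi>) \<ge> k"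
proof
  fix k :: nat
  obtain M where "\<forall>v. is_lvec v \<longrightarrow> v \<noteq> vzero \<longrightarrow>
      (\<exists>j \<le> M. k < pauli_weight (mat_vec (mat_pow A j) v))"
    using pauli_weight_eventually_exceeds[OF fractal_is_lmat fractal_det fractal_no_shifted_return]
      assms(1) by blast
  thus "\<exists>m. pauli_weight (mat_vec (mat_pow A m) \<xi>) \<ge> k"
    using assms(2,3) less_imp_le by blast
qed

end
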